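(* Let $k$ be a field and let $\varphi$ be a cubic form on a finite-dimensional vector space $V$ over $k$. If there exists a simple field extension $K/k$ with $[K:k] = 4$ such that $\varphi_K$ is isotropic, then there exists a finite extension $L/k$ with $[L:k] \in \{1,5\}$ such that $\varphi_L$ is isotropic.
   Context: A cubic form is a homogeneous polynomial function of degree $3$. For a field extension $K/k$, $\varphi_K$ denotes the form on $V \otimes_k K$ with $\varphi_K(v \otimes w) = w^3 \varphi(v)$. A form is isotropic if it has a non-zero zero. *)

theory Defs
  imports "HOL-Algebra.Algebra"
begin

text \<open>A cubic form on V = k^n (coordinates w.r.t. a basis of the finite-dimensional
  space V): phi(x) = sum over i,j,l < n of c i j l * x_i * x_j * x_l, with coefficients in k.\<close>
definition cubic_form :: "('a, 'm) ring_scheme \<Rightarrow> nat \<Rightarrow> (nat \<Rightarrow> nat \<Rightarrow> nat \<Rightarrow> 'a) \<Rightarrow> bool" where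
  "cubic_form k n c \<longleftrightarrow> (\<forall>i<n. \<forall>j<n. \<forall>l<n. c i j l \<in> carrier k)"

definition base_change_eval ::
  "('b, 'n) ring_scheme \<Rightarrow> ('a \<Rightarrow> 'b) \<Rightarrow> nat \<Rightarrow> (nat \<Rightarrow> nat \<Rightarrow> nat \<Rightarrow> 'a) \<Rightarrow> (nat \<Rightarrow> 'b) \<Rightarrow> 'b" where
  "base_change_eval L h n c x =
     (\<Oplus>\<^bsub>L\<^esub> i \<in> {..<n}. \<Oplus>\<^bsub>L\<^esub> j \<in> {..<n}. \<Oplus>\<^bsub>L\<^esub> l \<in> {..<n}.
        h (c i j l) \<otimes>\<^bsub>L\<^esub> x i \<otimes>\<^bsub>L\<^esub> x j \<otimes>\<^bsub>L\<^esub> x l)"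

definition isotropic_over ::
  "('b, 'n) ring_scheme \<Rightarrow> ('a \<Rightarrow> 'b) \<Rightarrow> nat \<Rightarrow> (nat \<Rightarrow> nat \<Rightarrow> nat \<Rightarrow> 'a) \<Rightarrow> bool" where
  "isotropic_over L h n c \<longleftrightarrow>
     (\<exists>x. (\<forall>i<n. x i \<in> carrier L) \<and> (\<exists>i<n. x i \<noteq> \<zero>\<^bsub>L\<^esub>) \<and> base_change_eval L h n c x = \<zero>\<^bsub>L\<^esub>)"

definition field_extension :: "('a, 'm) ring_scheme \<Rightarrow> ('b, 'n) ring_scheme \<Rightarrow> ('a \<Rightarrow> 'b) \<Rightarrow> bool" where
  "field_extension k L h \<longleftrightarrow> field L \<and> h \<in> ring_hom k L"

definition ext_degree_eq :: "('a, 'm) ring_scheme \<Rightarrow> ('b, 'n) ring_scheme \<Rightarrow> ('a \<Rightarrow> 'b) \<Rightarrow> nat \<Rightarrow> bool" where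
  "ext_degree_eq k L h d \<longleftrightarrow> ring.dimension L d (h ` carrier k) (carrier L)"

definition simple_field_extension :: "('a, 'm) ring_scheme \<Rightarrow> ('b, 'n) ring_scheme \<Rightarrow> ('a \<Rightarrow> 'b) \<Rightarrow> bool" where
  "simple_field_extension k L h \<longleftrightarrow>
     (\<exists>\<alpha> \<in> carrier L. carrier L = generate_field L (insert \<alpha> (h ` carrier k)))"

end

theory Submission
  imports Defs
begin

text \<open>
  Write \<open>K = k(\<alpha>) \<cong> k[t]/(p)\<close> with \<open>p\<close> irreducible of degree 4. A zero of \<open>\<phi>\<^sub>K\<close> is represented
  by polynomials \<open>v\<^sub>j(t)\<close>, not all divisible by \<open>p\<close>, with \<open>p\<close> dividing \<open>\<phi>(v(t))\<close>. Take such a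
  representative whose degrees are bounded by the least possible \<open>e\<close>: then \<open>e < 4\<close>, the vector
  \<open>w\<close> of coefficients of \<open>t\<^sup>e\<close> is non-zero, and no irreducible polynomial divides all \<open>v\<^sub>j\<close>.
  If \<open>\<phi>(w) = 0\<close>, then \<open>\<phi>\<close> is isotropic over \<open>k\<close>. Otherwise \<open>\<phi>(v(t))\<close> has degree exactly \<open>3e\<close>,
  so \<open>\<phi>(v(t)) = p G\<close> with \<open>deg G = 3e - 4 \<in> {2, 5}\<close>, and every irreducible factor \<open>q\<close> of \<open>G\<close>
  yields a zero of \<open>\<phi>\<close> over \<open>k[t]/(q)\<close>. Some such \<open>q\<close> has degree 1, 2 or 5; in degree 2 the
  same argument gives \<open>deg G = 3e - 2 = 1\<close>, which brings us down to degree 1.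
\<close>

lemma (in ring) base_change_eval_closed:
  assumes "\<And>i j l. i<n \<Longrightarrow> j<n \<Longrightarrow> l<n \<Longrightarrow> h (c i j l) \<in> carrier R"
    and "\<And>i. i<n \<Longrightarrow> x i \<in> carrier R"
  shows "base_change_eval R h n c x \<in> carrier R"
  unfolding base_change_eval_def using assms by (auto intro!: finsum_closed)

lemma (in ring) base_change_eval_cong:
  assumes "\<And>i j l. i<n \<Longrightarrow> j<n \<Longrightarrow> l<n \<Longrightarrow> h (c i j l) = h' (c i j l)"
    and "\<And>i. i<n \<Longrightarrow> x i = y i"
    and "\<And>i j l. i<n \<Longrightarrow> j<n \<Longrightarrow> l<n \<Longrightarrow> h' (c i j l) \<in> carrier R"
    and "\<And>i. i<n \<Longrightarrow> y i \<in> carrier R"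
  shows "base_change_eval R h n c x = base_change_eval R h' n c y"
  unfolding base_change_eval_def using assms by (auto intro!: finsum_cong' finsum_closed)

lemma base_change_eval_hom:
  assumes "ring_hom_cring A B \<psi>"
    and "\<And>i j l. i<n \<Longrightarrow> j<n \<Longrightarrow> l<n \<Longrightarrow> h (c i j l) \<in> carrier A"
    and "\<And>i. i<n \<Longrightarrow> x i \<in> carrier A"
  shows "\<psi> (base_change_eval A h n c x) = base_change_eval B (\<psi> \<circ> h) n c (\<psi> \<circ> x)"
proof -
  interpret H: ring_hom_cring A B \<psi> by fact
  show ?thesis
    unfolding base_change_eval_def using assms(2,3)
    by (subst H.hom_finsum, fastforce intro: H.R.finsum_closed,
        auto simp: Pi_def intro!: H.S.finsum_cong')
qed

lemma (in cring) base_change_eval_smult: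
  assumes "s \<in> carrier R"
    and "\<And>i j l. i<n \<Longrightarrow> j<n \<Longrightarrow> l<n \<Longrightarrow> h (c i j l) \<in> carrier R"
    and "\<And>i. i<n \<Longrightarrow> x i \<in> carrier R"
  shows "base_change_eval R h n c (\<lambda>i. s \<otimes> x i) = s [^] (3::nat) \<otimes> base_change_eval R h n c x"
proof -
  have "h (c i j l) \<otimes> (s \<otimes> x i) \<otimes> (s \<otimes> x j) \<otimes> (s \<otimes> x l)
      = s [^] (3::nat) \<otimes> (h (c i j l) \<otimes> x i \<otimes> x j \<otimes> x l)" if "i<n" "j<n" "l<n" for i j l
    using that assms by (simp add: numeral_3_eq_3 m_ac)
  then show ?thesis
    unfolding base_change_eval_def using assms
    by (auto simp: finsum_rdistr Pi_def intro!: finsum_cong' finsum_closed)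
qed

section \<open>Polynomials over a field\<close>

context domain
begin

lemma poly_of_const_closed: "a \<in> carrier R \<Longrightarrow> poly_of_const a \<in> carrier (poly_ring R)"
  using ring_hom_closed[OF canonical_embedding_is_hom[OF carrier_is_subring]] by simp

lemma poly_ring_mult_degree:
  assumes "f \<in> carrier (poly_ring R)" "g \<in> carrier (poly_ring R)" "f \<noteq> []" "g \<noteq> []"
  shows "f \<otimes>\<^bsub>poly_ring R\<^esub> g \<noteq> []" and "degree (f \<otimes>\<^bsub>poly_ring R\<^esub> g) = degree f + degree g"
  using poly_mult_integral[OF carrier_is_subring] poly_mult_degree_eq[OF carrier_is_subring] assms
  by (auto simp: univ_poly_mult univ_poly_carrier)

lemma poly_length_le_if_coeff_zero:
  assumes "f \<in> carrier (poly_ring R)" "length f \<le> Suc e" "coeff f e = \<zero>"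
  shows "length f \<le> e"
proof (rule ccontr)
  assume "\<not> length f \<le> e"
  then have "f \<noteq> []" "degree f = e" using assms(2) by auto
  then have "coeff f e = lead_coeff f" using lead_coeff_simp[of f] by simp
  moreover have "lead_coeff f \<noteq> \<zero>"
    using assms(1) \<open>f \<noteq> []\<close> unfolding univ_poly_carrier[symmetric] polynomial_def by simp
  ultimately show False using assms(3) by simp
qed

lemma poly_mult_top_coeff:
  assumes "f \<in> carrier (poly_ring R)" "g \<in> carrier (poly_ring R)"
    and "length f \<le> Suc a" "length g \<le> Suc b"
  shows "length (f \<otimes>\<^bsub>poly_ring R\<^esub> g) \<le> Suc (a + b)"
    and "coeff (f \<otimes>\<^bsub>poly_ring R\<^esub> g) (a + b) = coeff f a \<otimes> coeff g b"
proof -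
  have pf: "polynomial (carrier R) f" and pg: "polynomial (carrier R) g"
    using assms(1,2) univ_poly_carrier by blast+
  have sf: "set f \<subseteq> carrier R" and sg: "set g \<subseteq> carrier R"
    using pf pg polynomial_in_carrier carrier_is_subring by blast+
  have "length (poly_mult f g) \<le> Suc (a + b) \<and> coeff (poly_mult f g) (a + b) = coeff f a \<otimes> coeff g b"
  proof (cases "f = [] \<or> g = []")
    case True
    then show ?thesis using poly_mult_zero[OF sf] poly_mult_zero[OF sg] sf sg by auto
  next
    case False
    have deg: "degree (poly_mult f g) = degree f + degree g"
      using poly_mult_degree_eq[OF carrier_is_subring pf pg] False by simp
    have "poly_mult f g \<noteq> []"
      using poly_mult_integral[OF carrier_is_subring pf pg] False by auto
    then have len: "length (poly_mult f g) \<le> Suc (a + b)"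
      using deg assms(3,4) False by (cases "poly_mult f g") auto
    show ?thesis
    proof (cases "degree f = a \<and> degree g = b")
      case True
      then show ?thesis
        using len poly_mult_lead_coeff_aux[OF carrier_is_subring pf pg] False lead_coeff_simp
        by metis
    next
      case False
      then have "degree f < a \<or> degree g < b" using assms(3,4) by auto
      then have "coeff f a \<otimes> coeff g b = \<zero>"
        using coeff_degree[of f a] coeff_degree[of g b] sf sg by auto
      moreover have "degree (poly_mult f g) < a + b" using deg assms(3,4) False by auto
      ultimately show ?thesis using coeff_degree len by auto
    qed
  qed
  then show "length (f \<otimes>\<^bsub>poly_ring R\<^esub> g) \<le> Suc (a + b)"
    and "coeff (f \<otimes>\<^bsub>poly_ring R\<^esub> g) (a + b) = coeff f a \<otimes> coeff g b"
    by (auto simp: univ_poly_mult)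
qed

lemma poly_finsum_top_coeff:
  assumes "finite A"
    and "\<And>i. i \<in> A \<Longrightarrow> F i \<in> carrier (poly_ring R) \<and> length (F i) \<le> Suc a \<and> coeff (F i) a = W i"
  shows "finsum (poly_ring R) F A \<in> carrier (poly_ring R) \<and>
    length (finsum (poly_ring R) F A) \<le> Suc a \<and> coeff (finsum (poly_ring R) F A) a = (\<Oplus>i\<in>A. W i)"
  using assms
proof (induction A rule: finite_induct)
  case empty
  interpret P: cring "poly_ring R" using univ_poly_is_cring[OF carrier_is_subring] .
  show ?case using P.zero_closed by (simp add: univ_poly_zero)
next
  case (insert x A)
  interpret P: cring "poly_ring R" using univ_poly_is_cring[OF carrier_is_subring] .
  have F: "F \<in> A \<rightarrow> carrier (poly_ring R)" "F x \<in> carrier (poly_ring R)"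
    using insert.prems by auto
  have W: "W i \<in> carrier R" if "i \<in> insert x A" for i
    using insert.prems[OF that] coeff_in_carrier polynomial_in_carrier[OF carrier_is_subring]
    by (metis univ_poly_carrier)
  have IH: "finsum (poly_ring R) F A \<in> carrier (poly_ring R)"
    "length (finsum (poly_ring R) F A) \<le> Suc a" "coeff (finsum (poly_ring R) F A) a = (\<Oplus>i\<in>A. W i)"
    using insert by auto
  have sets: "set (F x) \<subseteq> carrier R" "set (finsum (poly_ring R) F A) \<subseteq> carrier R"
    using F(2) IH(1) polynomial_in_carrier[OF carrier_is_subring] univ_poly_carrier by blast+
  have "finsum (poly_ring R) F (insert x A) = F x \<oplus>\<^bsub>poly_ring R\<^esub> finsum (poly_ring R) F A"
    using P.finsum_insert[OF insert.hyps F] .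
  moreover have "length (F x \<oplus>\<^bsub>poly_ring R\<^esub> finsum (poly_ring R) F A) \<le> Suc a"
    using poly_add_length_le[of "F x" "finsum (poly_ring R) F A"] insert.prems[of x] IH(2)
    unfolding univ_poly_add by auto
  moreover have "coeff (F x \<oplus>\<^bsub>poly_ring R\<^esub> finsum (poly_ring R) F A) a = W x \<oplus> (\<Oplus>i\<in>A. W i)"
    using poly_add_coeff[OF sets] insert.prems[of x] IH(3) unfolding univ_poly_add by auto
  ultimately show ?case
    using insert.hyps F IH(1) W by (simp add: Pi_def)
qed

lemma mem_cgenideal_iff_pdivides:
  assumes q: "q \<in> carrier (poly_ring R)"
  shows "f \<in> PIdl\<^bsub>poly_ring R\<^esub> q \<longleftrightarrow> q pdivides f"
proof -
  interpret P: cring "poly_ring R" using univ_poly_is_cring[OF carrier_is_subring] .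
  show ?thesis unfolding pdivides_def cgenideal_def factor_def using P.m_comm q by auto
qed

lemma rupture_surj_eq_zero_iff:
  assumes q: "q \<in> carrier (poly_ring R)" and f: "f \<in> carrier (poly_ring R)"
  shows "rupture_surj (carrier R) q f = \<zero>\<^bsub>Rupt (carrier R) q\<^esub> \<longleftrightarrow> q pdivides f"
proof -
  interpret P: cring "poly_ring R" using univ_poly_is_cring[OF carrier_is_subring] .
  have I: "ideal (PIdl\<^bsub>poly_ring R\<^esub> q) (poly_ring R)" using P.cgenideal_ideal[OF q] .
  have "rupture_surj (carrier R) q f = \<zero>\<^bsub>Rupt (carrier R) q\<^esub> \<longleftrightarrow> f \<in> PIdl\<^bsub>poly_ring R\<^esub> q"
    using ideal.rcos_const_imp_mem[OF I f] P.a_rcos_zero[OF I]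
    by (auto simp: rupture_def FactRing_def)
  then show ?thesis using mem_cgenideal_iff_pdivides[OF q] by simp
qed

end

context field
begin

lemma rupture_is_field:
  assumes "q \<in> carrier (poly_ring R)" "pirreducible (carrier R) q"
  shows "field (Rupt (carrier R) q)"
  using rupture_is_field_iff_pirreducible[OF carrier_is_subfield assms(1)] assms(2) by simp

lemma reducible_poly_split:
  assumes f: "f \<in> carrier (poly_ring R)" "degree f \<ge> 1" and red: "\<not> pirreducible (carrier R) f"
  obtains a b where "a \<in> carrier (poly_ring R)" "b \<in> carrier (poly_ring R)" "f = a \<otimes>\<^bsub>poly_ring R\<^esub> b"
    "degree a \<ge> 1" "degree b \<ge> 1" "degree f = degree a + degree b"
proof -
  interpret P: cring "poly_ring R" using univ_poly_is_cring[OF carrier_is_subring] .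
  have f_nz: "f \<noteq> []" using f(2) by auto
  have f_nu: "f \<notin> Units (poly_ring R)" using univ_poly_units'[OF carrier_is_subfield, of f] f(2) by (simp, arith)
  have "\<exists>a b. a \<in> carrier (poly_ring R) \<and> b \<in> carrier (poly_ring R) \<and> f = a \<otimes>\<^bsub>poly_ring R\<^esub> b \<and>
      a \<notin> Units (poly_ring R) \<and> b \<notin> Units (poly_ring R)"
  proof (rule ccontr)
    assume "\<not> ?thesis"
    then have "pirreducible (carrier R) f"
      by (intro pirreducibleI[OF carrier_is_subring f(1) f_nz f_nu]) blast
    with red show False by contradiction
  qed
  then obtain a b where ab: "a \<in> carrier (poly_ring R)" "b \<in> carrier (poly_ring R)"
    "f = a \<otimes>\<^bsub>poly_ring R\<^esub> b" "a \<notin> Units (poly_ring R)" "b \<notin> Units (poly_ring R)"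
    by blast
  have "a \<noteq> []" using ab(2,3) f_nz P.l_null[of b] unfolding univ_poly_zero by force
  moreover have "b \<noteq> []" using ab(1,3) f_nz P.r_null[of a] unfolding univ_poly_zero by force
  ultimately have "degree a \<ge> 1" "degree b \<ge> 1"
    using ab univ_poly_units'[OF carrier_is_subfield] by (simp_all add: Suc_le_eq)
  moreover have "degree f = degree a + degree b"
    using poly_ring_mult_degree(2)[OF ab(1,2) \<open>a \<noteq> []\<close> \<open>b \<noteq> []\<close>] ab(3) by simp
  ultimately show ?thesis using that[OF ab(1-3)] by blast
qed

lemma pirreducible_factor_exists:
  assumes "f \<in> carrier (poly_ring R)" "degree f \<ge> 1"
  shows "\<exists>q\<in>carrier (poly_ring R). pirreducible (carrier R) q \<and> q pdivides f \<and> degree q \<le> degree f"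
  using assms
proof (induction "degree f" arbitrary: f rule: less_induct)
  case less
  interpret P: cring "poly_ring R" using univ_poly_is_cring[OF carrier_is_subring] .
  show ?case
  proof (cases "pirreducible (carrier R) f")
    case True
    then show ?thesis using less.prems unfolding pdivides_def by blast
  next
    case False
    then obtain a b where ab: "a \<in> carrier (poly_ring R)" "b \<in> carrier (poly_ring R)"
      "f = a \<otimes>\<^bsub>poly_ring R\<^esub> b" "degree a \<ge> 1" "degree b \<ge> 1" "degree f = degree a + degree b"
      using reducible_poly_split[OF less.prems] by blast
    then have "degree a < degree f" by simp
    then obtain q where q: "q \<in> carrier (poly_ring R)" "pirreducible (carrier R) q" "q pdivides a"
      "degree q \<le> degree a"
      using less.hyps[OF _ ab(1,4)] by blast
    have "q pdivides f"
      using P.divides_prod_r[OF q(3)[unfolded pdivides_def] q(1) ab(2)] ab(3) unfolding pdivides_def by simp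
    then show ?thesis using q ab(6) by force
  qed
qed

lemma small_pirreducible_factor_exists:
  assumes "f \<in> carrier (poly_ring R)" "degree f \<ge> 1"
  shows "\<exists>q\<in>carrier (poly_ring R). pirreducible (carrier R) q \<and> q pdivides f \<and>
    (degree q = degree f \<or> 2 * degree q \<le> degree f)"
proof -
  interpret P: cring "poly_ring R" using univ_poly_is_cring[OF carrier_is_subring] .
  show ?thesis
  proof (cases "pirreducible (carrier R) f")
    case True
    then show ?thesis using assms(1) unfolding pdivides_def by blast
  next
    case False
    obtain a b where ab: "a \<in> carrier (poly_ring R)" "b \<in> carrier (poly_ring R)"
      "f = a \<otimes>\<^bsub>poly_ring R\<^esub> b" "degree a \<ge> 1" "degree b \<ge> 1" "degree f = degree a + degree b"
      using reducible_poly_split[OF assms False] by blast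
    have "\<exists>g\<in>carrier (poly_ring R). g pdivides f \<and> degree g \<ge> 1 \<and> 2 * degree g \<le> degree f"
    proof (cases "degree a \<le> degree b")
      case True
      then show ?thesis
        using ab P.divides_prod_r[of a a b] unfolding pdivides_def by (intro bexI[of _ a]) auto
    next
      case False
      then show ?thesis
        using ab P.divides_prod_l[of b b a] unfolding pdivides_def by (intro bexI[of _ b]) auto
    qed
    then obtain g where g: "g \<in> carrier (poly_ring R)" "g pdivides f" "degree g \<ge> 1" "2 * degree g \<le> degree f"
      by blast
    then obtain q where "q \<in> carrier (poly_ring R)" "pirreducible (carrier R) q" "q pdivides g"
      "degree q \<le> degree g"
      using pirreducible_factor_exists by blast
    then show ?thesis
      using g P.divides_trans[of q g f] assms(1) unfolding pdivides_def by force
  qed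
qed

lemma poly_hom_kernel_generator:
  assumes L: "domain L" and \<psi>: "\<psi> \<in> ring_hom (poly_ring R) L"
    and f0: "f0 \<in> carrier (poly_ring R)" "f0 \<noteq> []" "\<psi> f0 = \<zero>\<^bsub>L\<^esub>"
  obtains q where "q \<in> carrier (poly_ring R)" "pirreducible (carrier R) q"
    "\<And>f. f \<in> carrier (poly_ring R) \<Longrightarrow> \<psi> f = \<zero>\<^bsub>L\<^esub> \<longleftrightarrow> q pdivides f"
proof -
  interpret P: principal_domain "poly_ring R" using univ_poly_is_principal[OF carrier_is_subfield] .
  interpret L: domain L by fact
  interpret \<Psi>: ring_hom_ring "poly_ring R" L \<psi> using ring_hom_ringI2[OF P.ring_axioms L.ring_axioms \<psi>] .
  obtain q where q: "q \<in> carrier (poly_ring R)" "a_kernel (poly_ring R) L \<psi> = PIdl\<^bsub>poly_ring R\<^esub> q"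
    using P.exists_gen[OF \<Psi>.kernel_is_ideal] by blast
  have ker: "\<psi> f = \<zero>\<^bsub>L\<^esub> \<longleftrightarrow> q pdivides f" if "f \<in> carrier (poly_ring R)" for f
    using q(2) mem_cgenideal_iff_pdivides[OF q(1), of f] that unfolding a_kernel_def' by blast
  have "q \<noteq> []" using ker[OF f0(1)] f0(2,3) zero_pdivides by auto
  have "primeideal {r \<in> carrier (poly_ring R). \<psi> r \<in> {\<zero>\<^bsub>L\<^esub>}} (poly_ring R)"
    using \<Psi>.primeideal_vimage[OF P.is_cring L.zeroprimeideal] .
  then have "primeideal (PIdl\<^bsub>poly_ring R\<^esub> q) (poly_ring R)"
    using q(2) unfolding a_kernel_def' by simp
  then have "pprime (carrier R) q"
    using P.primeideal_iff_prime q(1) \<open>q \<noteq> []\<close> by (simp add: univ_poly_zero)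
  then show ?thesis
    using that q(1) ker pprime_iff_pirreducible[OF carrier_is_subfield q(1)] by blast
qed

lemma poly_quotient_dimension:
  assumes q: "q \<in> carrier (poly_ring R)" "pirreducible (carrier R) q"
    and L: "field L" and \<psi>: "\<psi> \<in> ring_hom (poly_ring R) L"
    and onto: "\<psi> ` carrier (poly_ring R) = carrier L"
    and ker: "\<And>f. f \<in> carrier (poly_ring R) \<Longrightarrow> \<psi> f = \<zero>\<^bsub>L\<^esub> \<longleftrightarrow> q pdivides f"
  shows "ring.dimension L (degree q) ((\<psi> \<circ> poly_of_const) ` carrier R) (carrier L)"
proof -
  interpret P: cring "poly_ring R" using univ_poly_is_cring[OF carrier_is_subring] .
  interpret L: field L by fact
  interpret S: field "Rupt (carrier R) q" using rupture_is_field[OF q] .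
  interpret \<Psi>: ring_hom_ring "poly_ring R" L \<psi> using ring_hom_ringI2[OF P.ring_axioms L.ring_axioms \<psi>] .
  let ?rs = "rupture_surj (carrier R) q"
  define \<theta> where "\<theta> = (\<lambda>C. the_elem (\<psi> ` C))"
  have "f \<in> a_kernel (poly_ring R) L \<psi> \<longleftrightarrow> f \<in> PIdl\<^bsub>poly_ring R\<^esub> q" for f
    using ker[of f] mem_cgenideal_iff_pdivides[OF q(1), of f] ideal.Icarr[OF P.cgenideal_ideal[OF q(1)], of f]
    unfolding a_kernel_def' by auto
  then have kernel: "a_kernel (poly_ring R) L \<psi> = PIdl\<^bsub>poly_ring R\<^esub> q" by blast
  have "\<theta> \<in> ring_iso (poly_ring R Quot a_kernel (poly_ring R) L \<psi>) (L\<lparr>carrier := \<psi> ` carrier (poly_ring R)\<rparr>)"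
    unfolding \<theta>_def using \<Psi>.FactRing_iso_set_aux .
  then have iso: "\<theta> \<in> ring_iso (Rupt (carrier R) q) L"
    unfolding kernel onto rupture_def by simp
  then have \<theta>: "ring_hom_ring (Rupt (carrier R) q) L \<theta>" "inj_on \<theta> (carrier (Rupt (carrier R) q))"
    "\<theta> ` carrier (Rupt (carrier R) q) = carrier L"
    using ring_hom_ringI2[OF S.ring_axioms L.ring_axioms] unfolding ring_iso_def bij_betw_def by auto
  have "?rs \<circ> poly_of_const \<in> ring_hom R (Rupt (carrier R) q)"
    using rupture_surj_norm_is_hom[OF carrier_is_subring q(1)] by simp
  then have "subfield ((?rs \<circ> poly_of_const) ` carrier R) (Rupt (carrier R) q)"
    using ring_hom_ring.img_is_subfield(2)[OF ring_hom_ringI2[OF ring_axioms S.ring_axioms]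
        carrier_is_subfield S.one_not_zero] by blast
  then have "subfield (?rs ` poly_of_const ` carrier R) (Rupt (carrier R) q)"
    by (simp add: image_comp)
  moreover have "S.dimension (degree q) (?rs ` poly_of_const ` carrier R) (carrier (Rupt (carrier R) q))"
    using rupture_dimension[OF carrier_is_subfield q(1)] pirreducible_degree[OF carrier_is_subfield q] by simp
  ultimately have "L.dimension (degree q) (\<theta> ` ?rs ` poly_of_const ` carrier R) (carrier L)"
    using ring_hom_ring.inj_hom_dimension[OF \<theta>(1) _ L.one_not_zero \<theta>(2)] \<theta>(3) by metis
  moreover have "\<theta> (?rs (poly_of_const a)) = \<psi> (poly_of_const a)" if "a \<in> carrier R" for a
    using \<Psi>.the_elem_simp[OF poly_of_const_closed[OF that]] unfolding \<theta>_def kernel .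
  ultimately show ?thesis by (simp add: image_comp cong: image_cong)
qed

end

section \<open>Zeros modulo an irreducible polynomial\<close>

text \<open>\<open>isotropic_mod R n c q v\<close>: the residues of the \<open>v j\<close> modulo \<open>q\<close> form a non-trivial zero
  of \<open>\<phi>\<close> over \<open>k[t]/(q)\<close>, which for irreducible \<open>q\<close> is an extension of \<open>k\<close> of degree \<open>degree q\<close>.\<close>

definition isotropic_mod ::
  "('a, 'm) ring_scheme \<Rightarrow> nat \<Rightarrow> (nat \<Rightarrow> nat \<Rightarrow> nat \<Rightarrow> 'a) \<Rightarrow> 'a list \<Rightarrow> (nat \<Rightarrow> 'a list) \<Rightarrow> bool"
  where "isotropic_mod R n c q v \<longleftrightarrow>
    (\<forall>j<n. v j \<in> carrier (poly_ring R)) \<and> (\<exists>j<n. \<not> q pdivides\<^bsub>R\<^esub> v j) \<and>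
    q pdivides\<^bsub>R\<^esub> base_change_eval (poly_ring R) (ring.poly_of_const R) n c v"

definition isotropic_in_degree :: "('a, 'm) ring_scheme \<Rightarrow> nat \<Rightarrow> (nat \<Rightarrow> nat \<Rightarrow> nat \<Rightarrow> 'a) \<Rightarrow> nat \<Rightarrow> bool"
  where "isotropic_in_degree R n c d \<longleftrightarrow>
    (\<exists>q v. q \<in> carrier (poly_ring R) \<and> pirreducible\<^bsub>R\<^esub> (carrier R) q \<and> degree q = d \<and>
      isotropic_mod R n c q v)"

abbreviation (in ring) form_poly :: "nat \<Rightarrow> (nat \<Rightarrow> nat \<Rightarrow> nat \<Rightarrow> 'a) \<Rightarrow> (nat \<Rightarrow> 'a list) \<Rightarrow> 'a list" where
  "form_poly n c v \<equiv> base_change_eval (poly_ring R) poly_of_const n c v"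

context domain
begin

lemma form_poly_closed:
  assumes "cubic_form R n c" and "\<And>j. j<n \<Longrightarrow> v j \<in> carrier (poly_ring R)"
  shows "form_poly n c v \<in> carrier (poly_ring R)"
  using assms
  by (intro ring.base_change_eval_closed[OF univ_poly_is_ring[OF carrier_is_subring]])
    (auto simp: cubic_form_def poly_of_const_closed)

lemma form_poly_top_coeff:
  assumes c: "cubic_form R n c"
    and v: "\<And>j. j<n \<Longrightarrow> v j \<in> carrier (poly_ring R)" "\<And>j. j<n \<Longrightarrow> length (v j) \<le> Suc e"
  shows "length (form_poly n c v) \<le> Suc (3*e)"
    and "coeff (form_poly n c v) (3*e) = base_change_eval R (\<lambda>x. x) n c (\<lambda>j. coeff (v j) e)"
proof -
  interpret P: cring "poly_ring R" using univ_poly_is_cring[OF carrier_is_subring] .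
  have summand: "poly_of_const (c i j l) \<otimes>\<^bsub>poly_ring R\<^esub> v i \<otimes>\<^bsub>poly_ring R\<^esub> v j \<otimes>\<^bsub>poly_ring R\<^esub> v l
      \<in> carrier (poly_ring R) \<and>
    length (poly_of_const (c i j l) \<otimes>\<^bsub>poly_ring R\<^esub> v i \<otimes>\<^bsub>poly_ring R\<^esub> v j \<otimes>\<^bsub>poly_ring R\<^esub> v l)
      \<le> Suc (3*e) \<and>
    coeff (poly_of_const (c i j l) \<otimes>\<^bsub>poly_ring R\<^esub> v i \<otimes>\<^bsub>poly_ring R\<^esub> v j \<otimes>\<^bsub>poly_ring R\<^esub> v l) (3*e)
      = c i j l \<otimes> coeff (v i) e \<otimes> coeff (v j) e \<otimes> coeff (v l) e"
    if "i<n" "j<n" "l<n" for i j l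
  proof -
    have cijl: "poly_of_const (c i j l) \<in> carrier (poly_ring R)" "length (poly_of_const (c i j l)) \<le> Suc 0"
      "coeff (poly_of_const (c i j l)) 0 = c i j l"
      using c that unfolding cubic_form_def poly_of_const_def univ_poly_carrier[symmetric]
      by (auto simp: polynomial_def)
    note m1 = poly_mult_top_coeff[OF cijl(1) v(1)[OF that(1)] cijl(2) v(2)[OF that(1)]]
    note m2 = poly_mult_top_coeff[OF P.m_closed[OF cijl(1) v(1)[OF that(1)]] v(1)[OF that(2)] m1(1)
        v(2)[OF that(2)]]
    note m3 = poly_mult_top_coeff[OF P.m_closed[OF P.m_closed[OF cijl(1) v(1)[OF that(1)]] v(1)[OF that(2)]]
        v(1)[OF that(3)] m2(1) v(2)[OF that(3)]]
    have "0 + e + e + e = 3*e" by simp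
    then show ?thesis using m1(2) m2(2) m3 cijl(3) P.m_closed cijl(1) v(1) that by metis
  qed
  have "form_poly n c v \<in> carrier (poly_ring R) \<and> length (form_poly n c v) \<le> Suc (3*e) \<and>
    coeff (form_poly n c v) (3*e) = base_change_eval R (\<lambda>x. x) n c (\<lambda>j. coeff (v j) e)"
    unfolding base_change_eval_def
    by (intro poly_finsum_top_coeff finite_lessThan) (simp add: summand)
  then show "length (form_poly n c v) \<le> Suc (3*e)"
    and "coeff (form_poly n c v) (3*e) = base_change_eval R (\<lambda>x. x) n c (\<lambda>j. coeff (v j) e)"
    by auto
qed

lemma isotropic_mod_cong:
  assumes c: "cubic_form R n c" and eq: "\<And>j. j<n \<Longrightarrow> v j = v' j"
  shows "isotropic_mod R n c q v \<longleftrightarrow> isotropic_mod R n c q v'"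
proof (cases "\<forall>j<n. v' j \<in> carrier (poly_ring R)")
  case True
  have "form_poly n c v = form_poly n c v'"
    using c eq True
    by (intro ring.base_change_eval_cong[OF univ_poly_is_ring[OF carrier_is_subring]])
      (auto simp: cubic_form_def poly_of_const_closed)
  then show ?thesis using eq unfolding isotropic_mod_def by auto
qed (simp add: isotropic_mod_def, metis eq)

lemma isotropic_mod_iff_hom:
  assumes c: "cubic_form R n c" and L: "cring L"
    and \<psi>: "\<psi> \<in> ring_hom (poly_ring R) L"
    and ker: "\<And>f. f \<in> carrier (poly_ring R) \<Longrightarrow> \<psi> f = \<zero>\<^bsub>L\<^esub> \<longleftrightarrow> q pdivides f"
    and v: "\<And>j. j<n \<Longrightarrow> v j \<in> carrier (poly_ring R)"
  shows "isotropic_mod R n c q v \<longleftrightarrow>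
    (\<exists>j<n. \<psi> (v j) \<noteq> \<zero>\<^bsub>L\<^esub>) \<and> base_change_eval L (\<psi> \<circ> poly_of_const) n c (\<psi> \<circ> v) = \<zero>\<^bsub>L\<^esub>"
proof -
  interpret P: cring "poly_ring R" using univ_poly_is_cring[OF carrier_is_subring] .
  have "\<psi> (form_poly n c v) = base_change_eval L (\<psi> \<circ> poly_of_const) n c (\<psi> \<circ> v)"
    using c v by (intro base_change_eval_hom ring_hom_cringI[OF P.is_cring L \<psi>])
      (auto simp: cubic_form_def poly_of_const_closed)
  moreover have "\<And>j. j<n \<Longrightarrow> \<psi> (v j) = \<zero>\<^bsub>L\<^esub> \<longleftrightarrow> q pdivides v j"
    using ker v by blast
  moreover have "\<psi> (form_poly n c v) = \<zero>\<^bsub>L\<^esub> \<longleftrightarrow> q pdivides form_poly n c v"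
    using ker form_poly_closed[OF c] v by blast
  ultimately show ?thesis
    using v unfolding isotropic_mod_def by auto
qed

end

context field
begin

lemma isotropic_mod_iff_rupture:
  assumes c: "cubic_form R n c" and q: "q \<in> carrier (poly_ring R)" "pirreducible (carrier R) q"
    and v: "\<And>j. j<n \<Longrightarrow> v j \<in> carrier (poly_ring R)"
  shows "isotropic_mod R n c q v \<longleftrightarrow>
    (\<exists>j<n. rupture_surj (carrier R) q (v j) \<noteq> \<zero>\<^bsub>Rupt (carrier R) q\<^esub>) \<and>
    base_change_eval (Rupt (carrier R) q) (rupture_surj (carrier R) q \<circ> poly_of_const) n c
      (rupture_surj (carrier R) q \<circ> v) = \<zero>\<^bsub>Rupt (carrier R) q\<^esub>"
  using isotropic_mod_iff_hom[OF c fieldE(1)[OF rupture_is_field[OF q]]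
      rupture_surj_hom(1)[OF carrier_is_subring q(1)] rupture_surj_eq_zero_iff[OF q(1)] v] .

lemma isotropic_mod_pmod:
  assumes c: "cubic_form R n c" and q: "q \<in> carrier (poly_ring R)" "pirreducible (carrier R) q"
    and iso: "isotropic_mod R n c q v"
  shows "isotropic_mod R n c q (\<lambda>j. v j pmod q)" and "\<And>j. j<n \<Longrightarrow> length (v j pmod q) \<le> degree q"
proof -
  interpret S: field "Rupt (carrier R) q" using rupture_is_field[OF q] .
  let ?\<psi> = "rupture_surj (carrier R) q"
  have v: "\<And>j. j<n \<Longrightarrow> v j \<in> carrier (poly_ring R)" using iso unfolding isotropic_mod_def by blast
  have v': "\<And>j. j<n \<Longrightarrow> v j pmod q \<in> carrier (poly_ring R)"
    using long_division_closed(2)[OF carrier_is_subfield v q(1)] .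
  have same: "?\<psi> (v j pmod q) = ?\<psi> (v j)" if "j<n" for j
    using rupture_surj_composed_with_pmod[OF carrier_is_subfield q(1) v[OF that]] by simp
  have "base_change_eval (Rupt (carrier R) q) (?\<psi> \<circ> poly_of_const) n c (?\<psi> \<circ> (\<lambda>j. v j pmod q))
      = base_change_eval (Rupt (carrier R) q) (?\<psi> \<circ> poly_of_const) n c (?\<psi> \<circ> v)"
    using c v same ring_hom_closed[OF rupture_surj_hom(1)[OF carrier_is_subring q(1)]]
    by (intro S.base_change_eval_cong) (auto simp: cubic_form_def poly_of_const_closed)
  then show "isotropic_mod R n c q (\<lambda>j. v j pmod q)"
    using iso isotropic_mod_iff_rupture[OF c q v'] isotropic_mod_iff_rupture[OF c q v] same by auto
  show "length (v j pmod q) \<le> degree q" if "j<n" for j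
    using pmod_degree[OF carrier_is_subfield v[OF that] q(1)] pirreducible_degree[OF carrier_is_subfield q]
    by (cases "q = []") auto
qed

lemma isotropic_mod_cancel_factor:
  assumes c: "cubic_form R n c" and p: "p \<in> carrier (poly_ring R)" "pirreducible (carrier R) p"
    and a: "a \<in> carrier (poly_ring R)" "\<not> p pdivides a"
    and u: "\<And>j. j<n \<Longrightarrow> u j \<in> carrier (poly_ring R)"
    and iso: "isotropic_mod R n c p (\<lambda>j. a \<otimes>\<^bsub>poly_ring R\<^esub> u j)"
  shows "isotropic_mod R n c p u"
proof -
  interpret P: cring "poly_ring R" using univ_poly_is_cring[OF carrier_is_subring] .
  interpret S: field "Rupt (carrier R) p" using rupture_is_field[OF p] .
  let ?\<psi> = "rupture_surj (carrier R) p"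
  let ?\<phi> = "base_change_eval (Rupt (carrier R) p) (?\<psi> \<circ> poly_of_const) n c"
  have \<psi>: "?\<psi> \<in> ring_hom (poly_ring R) (Rupt (carrier R) p)" using rupture_surj_hom(1)[OF carrier_is_subring p(1)] .
  have coeffs: "(?\<psi> \<circ> poly_of_const) (c i j l) \<in> carrier (Rupt (carrier R) p)" if "i<n" "j<n" "l<n" for i j l
    using c that ring_hom_closed[OF \<psi>] by (simp add: cubic_form_def poly_of_const_closed)
  have \<psi>a: "?\<psi> a \<in> carrier (Rupt (carrier R) p)" "?\<psi> a \<noteq> \<zero>\<^bsub>Rupt (carrier R) p\<^esub>"
    using ring_hom_closed[OF \<psi> a(1)] rupture_surj_eq_zero_iff[OF p(1) a(1)] a(2) by auto
  have \<psi>u: "(?\<psi> \<circ> u) j \<in> carrier (Rupt (carrier R) p)" if "j<n" for j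
    using ring_hom_closed[OF \<psi> u[OF that]] by simp
  have au: "?\<psi> (a \<otimes>\<^bsub>poly_ring R\<^esub> u j) = ?\<psi> a \<otimes>\<^bsub>Rupt (carrier R) p\<^esub> (?\<psi> \<circ> u) j" if "j<n" for j
    using ring_hom_mult[OF \<psi> a(1) u[OF that]] by simp
  have "?\<phi> (?\<psi> \<circ> (\<lambda>j. a \<otimes>\<^bsub>poly_ring R\<^esub> u j))
      = ?\<phi> (\<lambda>j. ?\<psi> a \<otimes>\<^bsub>Rupt (carrier R) p\<^esub> (?\<psi> \<circ> u) j)"
    using coeffs au \<psi>a(1) \<psi>u by (intro S.base_change_eval_cong) auto
  also have "\<dots> = ?\<psi> a [^]\<^bsub>Rupt (carrier R) p\<^esub> (3::nat) \<otimes>\<^bsub>Rupt (carrier R) p\<^esub> ?\<phi> (?\<psi> \<circ> u)"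
    using coeffs \<psi>u by (intro S.base_change_eval_smult[OF \<psi>a(1)])
  moreover have "?\<phi> (?\<psi> \<circ> u) \<in> carrier (Rupt (carrier R) p)"
    using coeffs \<psi>u by (intro S.base_change_eval_closed)
  ultimately have "?\<phi> (?\<psi> \<circ> u) = \<zero>\<^bsub>Rupt (carrier R) p\<^esub>"
    using iso isotropic_mod_iff_rupture[OF c p, of "\<lambda>j. a \<otimes>\<^bsub>poly_ring R\<^esub> u j"] a(1) u \<psi>a
    by (auto simp: numeral_3_eq_3 S.integral_iff)
  moreover have "\<exists>j<n. ?\<psi> (u j) \<noteq> \<zero>\<^bsub>Rupt (carrier R) p\<^esub>"
  proof -
    obtain j where "j<n" "?\<psi> (a \<otimes>\<^bsub>poly_ring R\<^esub> u j) \<noteq> \<zero>\<^bsub>Rupt (carrier R) p\<^esub>"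
      using iso isotropic_mod_iff_rupture[OF c p, of "\<lambda>j. a \<otimes>\<^bsub>poly_ring R\<^esub> u j"] a(1) u by auto
    then show ?thesis using au[OF \<open>j<n\<close>] S.r_null[OF \<psi>a(1)] by auto
  qed
  ultimately show ?thesis using isotropic_mod_iff_rupture[OF c p u] by auto
qed

lemma isotropic_mod_divide_common_factor:
  assumes c: "cubic_form R n c" and p: "p \<in> carrier (poly_ring R)" "pirreducible (carrier R) p"
    and iso: "isotropic_mod R n c p v" and len: "\<And>j. j<n \<Longrightarrow> length (v j) \<le> Suc e"
    and q: "q \<in> carrier (poly_ring R)" "q \<noteq> []" "degree q < degree p"
    and dvd: "\<And>j. j<n \<Longrightarrow> q pdivides v j"
  shows "\<exists>u. isotropic_mod R n c p u \<and> (\<forall>j<n. length (u j) \<le> Suc (e - degree q))"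
proof -
  define u where "u j = (SOME r. r \<in> carrier (poly_ring R) \<and> v j = q \<otimes>\<^bsub>poly_ring R\<^esub> r)" for j
  have u: "u j \<in> carrier (poly_ring R) \<and> v j = q \<otimes>\<^bsub>poly_ring R\<^esub> u j" if "j<n" for j
    using dvd[OF that] unfolding u_def pdivides_def factor_def by (rule someI2_bex) blast
  have "\<not> p pdivides q"
    using pdivides_imp_degree_le[OF carrier_is_subring p(1) q(1,2)] q(3) by auto
  moreover have "isotropic_mod R n c p (\<lambda>j. q \<otimes>\<^bsub>poly_ring R\<^esub> u j)"
    using isotropic_mod_cong[OF c, of v "\<lambda>j. q \<otimes>\<^bsub>poly_ring R\<^esub> u j"] iso u by blast
  ultimately have "isotropic_mod R n c p u"
    using isotropic_mod_cancel_factor[OF c p q(1)] u by blast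
  moreover have "length (u j) \<le> Suc (e - degree q)" if "j<n" for j
  proof (cases "u j = []")
    case False
    then have "degree (v j) = degree q + degree (u j)"
      using poly_ring_mult_degree(2)[OF q(1) _ q(2)] u[OF that] by metis
    then show ?thesis using len[OF that] by simp
  qed simp
  ultimately show ?thesis by blast
qed

end

section \<open>Descent\<close>

context field
begin

lemma isotropic_mod_primitive_representative:
  assumes c: "cubic_form R n c" and p: "p \<in> carrier (poly_ring R)" "pirreducible (carrier R) p"
    and iso: "isotropic_mod R n c p v0"
  obtains v e where "isotropic_mod R n c p v" "\<And>j. j<n \<Longrightarrow> length (v j) \<le> Suc e"
    "e < degree p" "\<exists>j<n. coeff (v j) e \<noteq> \<zero>"
    "\<And>q. q \<in> carrier (poly_ring R) \<Longrightarrow> pirreducible (carrier R) q \<Longrightarrow> \<exists>j<n. \<not> q pdivides v j"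
proof -
  define bounded where "bounded e \<longleftrightarrow> (\<exists>v. isotropic_mod R n c p v \<and> (\<forall>j<n. length (v j) \<le> Suc e))"
    for e
  have dp: "degree p \<ge> 1" using pirreducible_degree[OF carrier_is_subfield p] .
  have "length (v0 j pmod p) \<le> Suc (degree p - 1)" if "j<n" for j
    using isotropic_mod_pmod(2)[OF c p iso that] dp by linarith
  then have "bounded (degree p - 1)"
    using isotropic_mod_pmod(1)[OF c p iso] unfolding bounded_def by blast
  define e where "e = (LEAST e. bounded e)"
  have e_min: "\<And>e'. bounded e' \<Longrightarrow> e \<le> e'" unfolding e_def by (rule Least_le)
  have "bounded e" unfolding e_def by (rule LeastI) fact
  then obtain v where iso_v: "isotropic_mod R n c p v" and len: "\<And>j. j<n \<Longrightarrow> length (v j) \<le> Suc e"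
    unfolding bounded_def by blast
  have v: "\<And>j. j<n \<Longrightarrow> v j \<in> carrier (poly_ring R)"
    and nd: "\<exists>j<n. \<not> p pdivides v j" using iso_v unfolding isotropic_mod_def by auto
  have e_lt: "e < degree p" using e_min[OF \<open>bounded (degree p - 1)\<close>] dp by simp
  have lead: "\<exists>j<n. coeff (v j) e \<noteq> \<zero>"
  proof (rule ccontr)
    assume "\<not> ?thesis"
    then have short: "\<And>j. j<n \<Longrightarrow> length (v j) \<le> e"
      using poly_length_le_if_coeff_zero v len by blast
    show False
    proof (cases e)
      case 0
      then show False using nd short pdivides_zero[OF carrier_is_subring p(1)] by auto
    next
      case (Suc e')
      then have "bounded e'" using iso_v short unfolding bounded_def by auto
      then show False using e_min Suc by force
    qed
  qed
  have prim: "\<exists>j<n. \<not> q pdivides v j" if q: "q \<in> carrier (poly_ring R)" "pirreducible (carrier R) q" for q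
  proof (rule ccontr)
    assume "\<not> ?thesis"
    then have dvd: "\<And>j. j<n \<Longrightarrow> q pdivides v j" by blast
    obtain j0 where j0: "j0 < n" "\<not> p pdivides v j0" using nd by blast
    then have "v j0 \<noteq> []" using pdivides_zero[OF carrier_is_subring p(1)] by auto
    then have "degree q \<le> e"
      using pdivides_imp_degree_le[OF carrier_is_subring q(1) v[OF j0(1)] _ dvd[OF j0(1)]] len[OF j0(1)]
      by simp
    moreover have "degree q \<ge> 1" using pirreducible_degree[OF carrier_is_subfield q] .
    moreover obtain u where "isotropic_mod R n c p u" "\<forall>j<n. length (u j) \<le> Suc (e - degree q)"
      using isotropic_mod_divide_common_factor[OF c p iso_v len q(1) _ _ dvd] \<open>degree q \<le> e\<close>
        \<open>degree q \<ge> 1\<close> e_lt by fastforce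
    then have "e \<le> e - degree q" using e_min unfolding bounded_def by blast
    ultimately show False by simp
  qed
  show ?thesis using that[OF iso_v len e_lt lead prim] .
qed

lemma isotropic_mod_descent:
  assumes c: "cubic_form R n c" and p: "p \<in> carrier (poly_ring R)" "pirreducible (carrier R) p"
    and iso: "isotropic_mod R n c p v0"
  obtains (rational) "isotropic_over R (\<lambda>x. x) n c"
    | (cofactor) G e where "G \<in> carrier (poly_ring R)" "e < degree p" "degree G + degree p = 3 * e"
      "\<And>q. q \<in> carrier (poly_ring R) \<Longrightarrow> pirreducible (carrier R) q \<Longrightarrow> q pdivides G \<Longrightarrow>
        isotropic_in_degree R n c (degree q)"
proof -
  interpret P: cring "poly_ring R" using univ_poly_is_cring[OF carrier_is_subring] .
  obtain v e where iso_v: "isotropic_mod R n c p v" and len: "\<And>j. j<n \<Longrightarrow> length (v j) \<le> Suc e"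
    and e_lt: "e < degree p" and lead: "\<exists>j<n. coeff (v j) e \<noteq> \<zero>"
    and prim: "\<And>q. q \<in> carrier (poly_ring R) \<Longrightarrow> pirreducible (carrier R) q \<Longrightarrow> \<exists>j<n. \<not> q pdivides v j"
    using isotropic_mod_primitive_representative[OF c p iso] by blast
  have v: "\<And>j. j<n \<Longrightarrow> v j \<in> carrier (poly_ring R)" using iso_v unfolding isotropic_mod_def by blast
  define w where "w j = coeff (v j) e" for j
  have w: "\<And>j. j<n \<Longrightarrow> w j \<in> carrier R"
    unfolding w_def using v coeff_in_carrier polynomial_in_carrier[OF carrier_is_subring]
    by (metis univ_poly_carrier)
  show ?thesis
  proof (cases "base_change_eval R (\<lambda>x. x) n c w = \<zero>")
    case True
    moreover have "\<exists>i<n. w i \<noteq> \<zero>" using lead unfolding w_def .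
    ultimately show ?thesis using rational w unfolding isotropic_over_def by blast
  next
    case False
    note top = form_poly_top_coeff[OF c v len]
    have "length (form_poly n c v) = Suc (3 * e)"
      using top False coeff_length[of "form_poly n c v" "3 * e"] unfolding w_def by force
    then have F: "form_poly n c v \<noteq> []" "degree (form_poly n c v) = 3 * e" by auto
    obtain G where G: "G \<in> carrier (poly_ring R)" "form_poly n c v = p \<otimes>\<^bsub>poly_ring R\<^esub> G"
      using iso_v unfolding isotropic_mod_def pdivides_def factor_def by blast
    have "G \<noteq> []" using F(1) G P.r_null[OF p(1)] by (auto simp: univ_poly_zero)
    then have "degree G + degree p = 3 * e"
      using poly_ring_mult_degree(2)[OF p(1) G(1)] F(2) G(2) pirreducibleE(1)[OF carrier_is_subring p]
      by simp
    moreover have "isotropic_in_degree R n c (degree q)"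
      if q: "q \<in> carrier (poly_ring R)" "pirreducible (carrier R) q" "q pdivides G" for q
    proof -
      have "q pdivides form_poly n c v"
        using G q P.divides_prod_l[OF q(1) G(1) p(1)] unfolding pdivides_def by simp
      then show ?thesis
        using q v prim[OF q(1,2)] unfolding isotropic_in_degree_def isotropic_mod_def by blast
    qed
    ultimately show ?thesis using cofactor G(1) e_lt by blast
  qed
qed

lemma isotropic_over_imp_isotropic_in_degree_1:
  assumes c: "cubic_form R n c" and iso: "isotropic_over R (\<lambda>x. x) n c"
  shows "isotropic_in_degree R n c 1"
proof -
  interpret P: cring "poly_ring R" using univ_poly_is_cring[OF carrier_is_subring] .
  obtain w where w: "\<And>i. i<n \<Longrightarrow> w i \<in> carrier R" "\<exists>i<n. w i \<noteq> \<zero>"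
    "base_change_eval R (\<lambda>x. x) n c w = \<zero>"
    using iso unfolding isotropic_over_def by blast
  have X: "X \<in> carrier (poly_ring R)" "degree X = 1" "pirreducible (carrier R) X"
    using var_closed(1)[OF carrier_is_subring]
      degree_one_imp_pirreducible[OF carrier_is_subfield var_closed(1)[OF carrier_is_subring]]
    by (auto simp: var_def)
  have poc: "poly_of_const \<in> ring_hom R (poly_ring R)"
    using canonical_embedding_is_hom[OF carrier_is_subring] by simp
  have "form_poly n c (poly_of_const \<circ> w) = poly_of_const (base_change_eval R (\<lambda>x. x) n c w)"
    using c w(1) base_change_eval_hom[OF ring_hom_cringI[OF is_cring P.is_cring poc], of n "\<lambda>x. x" c w]
    by (simp add: cubic_form_def o_def)
  also have "\<dots> = []" using w(3) by (simp add: poly_of_const_def)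
  finally have "X pdivides form_poly n c (poly_of_const \<circ> w)"
    using pdivides_zero[OF carrier_is_subring X(1)] by simp
  moreover have "\<not> X pdivides poly_of_const (w i)" if "w i \<noteq> \<zero>" "i<n" for i
    using pdivides_imp_degree_le[OF carrier_is_subring X(1) poly_of_const_closed[OF w(1)[OF that(2)]]]
      that X(2) by (auto simp: poly_of_const_def)
  ultimately have "isotropic_mod R n c X (poly_of_const \<circ> w)"
    using w(1,2) unfolding isotropic_mod_def by (auto simp: poly_of_const_closed)
  then show ?thesis using X unfolding isotropic_in_degree_def by blast
qed

lemma isotropic_in_degree_2_imp_1:
  assumes c: "cubic_form R n c" and iso: "isotropic_in_degree R n c 2"
  shows "isotropic_in_degree R n c 1"
proof -
  interpret P: cring "poly_ring R" using univ_poly_is_cring[OF carrier_is_subring] .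
  obtain q v where q: "q \<in> carrier (poly_ring R)" "pirreducible (carrier R) q" "degree q = 2"
    and iso_v: "isotropic_mod R n c q v"
    using iso unfolding isotropic_in_degree_def by blast
  show ?thesis
  proof (cases rule: isotropic_mod_descent[OF c q(1,2) iso_v, case_names rational cofactor])
    case rational
    then show ?thesis by (rule isotropic_over_imp_isotropic_in_degree_1[OF c])
  next
    case (cofactor G e)
    then have "degree G = 1" using q(3) by presburger
    then show ?thesis
      using cofactor(1,4) degree_one_imp_pirreducible[OF carrier_is_subfield cofactor(1)]
        P.divides_refl[OF cofactor(1)] unfolding pdivides_def by fastforce
  qed
qed

lemma isotropic_in_degree_4_imp_1_or_5:
  assumes c: "cubic_form R n c" and iso: "isotropic_in_degree R n c 4"
  shows "isotropic_in_degree R n c 1 \<or> isotropic_in_degree R n c 5"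
proof -
  obtain p v where p: "p \<in> carrier (poly_ring R)" "pirreducible (carrier R) p" "degree p = 4"
    and iso_v: "isotropic_mod R n c p v"
    using iso unfolding isotropic_in_degree_def by blast
  show ?thesis
  proof (cases rule: isotropic_mod_descent[OF c p(1,2) iso_v, case_names rational cofactor])
    case rational
    then show ?thesis using isotropic_over_imp_isotropic_in_degree_1[OF c] by blast
  next
    case (cofactor G e)
    then have "degree G = 2 \<or> degree G = 5" using p(3) by presburger
    then obtain q where q: "q \<in> carrier (poly_ring R)" "pirreducible (carrier R) q" "q pdivides G"
      "degree q = 1 \<or> degree q = 2 \<or> degree q = 5"
      using small_pirreducible_factor_exists[OF cofactor(1)] pirreducible_degree[OF carrier_is_subfield]
      by fastforce
    then show ?thesis using cofactor(4)[OF q(1-3)] isotropic_in_degree_2_imp_1[OF c] by auto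
  qed
qed

end

section \<open>Fields of remainders\<close>

definition ring_transport :: "('a, 'm) ring_scheme \<Rightarrow> ('a \<Rightarrow> 'b) \<Rightarrow> 'b ring"
  where "ring_transport S f =
    \<lparr>carrier = f ` carrier S,
     Group.monoid.mult = (\<lambda>x y. f (inv_into (carrier S) f x \<otimes>\<^bsub>S\<^esub> inv_into (carrier S) f y)),
     Group.monoid.one = f \<one>\<^bsub>S\<^esub>,
     Ring.ring.zero = f \<zero>\<^bsub>S\<^esub>,
     Ring.ring.add = (\<lambda>x y. f (inv_into (carrier S) f x \<oplus>\<^bsub>S\<^esub> inv_into (carrier S) f y))\<rparr>"

lemma ring_transport_iso:
  assumes "ring S" and inj: "inj_on f (carrier S)"
  shows "f \<in> ring_iso S (ring_transport S f)"
proof -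
  interpret ring S by fact
  have "f \<in> ring_hom S (ring_transport S f)"
    by (rule ring_hom_memI) (auto simp: ring_transport_def inv_into_f_f[OF inj])
  then show ?thesis
    using inj unfolding ring_iso_def bij_betw_def ring_transport_def by simp
qed

lemma field_ring_transport:
  assumes "field S" and "inj_on f (carrier S)"
  shows "field (ring_transport S f)"
proof -
  interpret field S by fact
  have "field (ring_transport S f \<lparr>zero := f \<zero>\<^bsub>S\<^esub>\<rparr>)"
    using ring_iso_imp_img_field[OF ring_transport_iso[OF ring_axioms assms(2)]] .
  then show ?thesis by (simp add: ring_transport_def)
qed

context field
begin

text \<open>The elements of \<open>Rupt (carrier R) q\<close> are cosets; representing each one by its remainder
  modulo \<open>q\<close> gives an isomorphic field carried by the type \<open>'a list\<close> required by the theorem.\<close>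

lemma rupture_field_of_remainders:
  assumes q: "q \<in> carrier (poly_ring R)" "pirreducible (carrier R) q"
  obtains L :: "'a list ring" and \<psi> where "field L" "\<psi> \<in> ring_hom (poly_ring R) L"
    "\<psi> ` carrier (poly_ring R) = carrier L"
    "\<And>f. f \<in> carrier (poly_ring R) \<Longrightarrow> \<psi> f = \<zero>\<^bsub>L\<^esub> \<longleftrightarrow> q pdivides f"
proof -
  interpret S: field "Rupt (carrier R) q" using rupture_is_field[OF q] .
  let ?rs = "rupture_surj (carrier R) q"
  define rep where "rep = inv_into ((\<lambda>g. g pmod q) ` carrier (poly_ring R)) ?rs"
  have inj: "inj_on rep (carrier (Rupt (carrier R) q))"
    unfolding rep_def using rupture_carrier_as_pmod_image[OF carrier_is_subfield q(1)]
    by (intro inj_on_inv_into) simp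
  define L where "L = ring_transport (Rupt (carrier R) q) rep"
  have iso: "rep \<in> ring_iso (Rupt (carrier R) q) L"
    unfolding L_def using ring_transport_iso[OF S.ring_axioms inj] .
  have "rep \<circ> ?rs \<in> ring_hom (poly_ring R) L"
    using ring_hom_trans[OF rupture_surj_hom(1)[OF carrier_is_subring q(1)]] iso unfolding ring_iso_def by blast
  moreover have "(rep \<circ> ?rs) ` carrier (poly_ring R) = carrier L"
  proof -
    have "?rs ` carrier (poly_ring R) = carrier (Rupt (carrier R) q)"
      unfolding rupture_def FactRing_def A_RCOSETS_def' by auto
    then show ?thesis using iso unfolding ring_iso_def bij_betw_def image_comp[symmetric] by simp
  qed
  moreover have "(rep \<circ> ?rs) f = \<zero>\<^bsub>L\<^esub> \<longleftrightarrow> q pdivides f" if "f \<in> carrier (poly_ring R)" for f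
  proof -
    have "\<zero>\<^bsub>L\<^esub> = rep \<zero>\<^bsub>Rupt (carrier R) q\<^esub>" unfolding L_def ring_transport_def by simp
    then show ?thesis
      using inj_on_eq_iff[OF inj ring_hom_closed[OF rupture_surj_hom(1)[OF carrier_is_subring q(1)] that] S.zero_closed]
        rupture_surj_eq_zero_iff[OF q(1) that] by simp
  qed
  ultimately show ?thesis
    using that field_ring_transport[OF S.field_axioms inj] unfolding L_def by blast
qed

lemma isotropic_in_degree_imp_isotropic_extension:
  assumes c: "cubic_form R n c" and iso: "isotropic_in_degree R n c d"
  shows "\<exists>(L :: 'a list ring) hL. field_extension R L hL \<and> ext_degree_eq R L hL d \<and>
    isotropic_over L hL n c"
proof -
  obtain q v where q: "q \<in> carrier (poly_ring R)" "pirreducible (carrier R) q" "degree q = d"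
    and iso_v: "isotropic_mod R n c q v"
    using iso unfolding isotropic_in_degree_def by blast
  obtain L :: "'a list ring" and \<psi> where L: "field L" and \<psi>: "\<psi> \<in> ring_hom (poly_ring R) L"
    and onto: "\<psi> ` carrier (poly_ring R) = carrier L"
    and ker: "\<And>f. f \<in> carrier (poly_ring R) \<Longrightarrow> \<psi> f = \<zero>\<^bsub>L\<^esub> \<longleftrightarrow> q pdivides f"
    using rupture_field_of_remainders[OF q(1,2)] by blast
  have v: "\<And>j. j<n \<Longrightarrow> v j \<in> carrier (poly_ring R)" using iso_v unfolding isotropic_mod_def by blast
  have "field_extension R L (\<psi> \<circ> poly_of_const)"
    using L ring_hom_trans[OF canonical_embedding_is_hom[OF carrier_is_subring] \<psi>]
    unfolding field_extension_def by simp
  moreover have "ext_degree_eq R L (\<psi> \<circ> poly_of_const) d"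
    using poly_quotient_dimension[OF q(1,2) L \<psi> onto ker] q(3) unfolding ext_degree_eq_def by simp
  moreover have "(\<exists>j<n. \<psi> (v j) \<noteq> \<zero>\<^bsub>L\<^esub>) \<and>
      base_change_eval L (\<psi> \<circ> poly_of_const) n c (\<psi> \<circ> v) = \<zero>\<^bsub>L\<^esub>"
    using isotropic_mod_iff_hom[OF c fieldE(1)[OF L] \<psi> ker] v iso_v
    by blast
  then have "isotropic_over L (\<psi> \<circ> poly_of_const) n c"
    using ring_hom_closed[OF \<psi> v] unfolding isotropic_over_def by (intro exI[of _ "\<psi> \<circ> v"]) auto
  ultimately show ?thesis by blast
qed

end

section \<open>Simple extensions\<close>

context field
begin

lemma eval_map_hom:
  assumes K: "field K" and h: "h \<in> ring_hom R K" and \<alpha>: "\<alpha> \<in> carrier K"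
  shows "(\<lambda>f. ring.eval K (map h f) \<alpha>) \<in> ring_hom (poly_ring R) K"
proof -
  interpret K: field K by fact
  interpret H: ring_hom_ring R K h using ring_hom_ringI2[OF ring_axioms K.ring_axioms h] .
  have set: "set f \<subseteq> carrier R" if "f \<in> carrier (poly_ring R)" for f
    using that polynomial_in_carrier[OF carrier_is_subring] univ_poly_carrier by blast
  have mapped: "set (map h f) \<subseteq> carrier K" if "set f \<subseteq> carrier R" for f
    using that by auto
  have eval_norm: "K.eval (map h f) \<alpha> = K.eval (K.normalize (map h f)) \<alpha>" if "set f \<subseteq> carrier R" for f
    using K.eval_normalize[OF mapped[OF that] \<alpha>] by simp
  show ?thesis
  proof (rule ring_hom_memI)
    fix f g assume f: "f \<in> carrier (poly_ring R)" and g: "g \<in> carrier (poly_ring R)"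
    show "K.eval (map h f) \<alpha> \<in> carrier K" using K.eval_in_carrier[OF mapped[OF set[OF f]] \<alpha>] .
    show "K.eval (map h (f \<otimes>\<^bsub>poly_ring R\<^esub> g)) \<alpha> = K.eval (map h f) \<alpha> \<otimes>\<^bsub>K\<^esub> K.eval (map h g) \<alpha>"
      using eval_norm[OF poly_mult_in_carrier[OF set[OF f] set[OF g]]] H.poly_mult_hom'[OF set[OF f] set[OF g]]
        K.eval_poly_mult[OF mapped[OF set[OF f]] mapped[OF set[OF g]] \<alpha>]
      by (simp add: univ_poly_mult)
    show "K.eval (map h (f \<oplus>\<^bsub>poly_ring R\<^esub> g)) \<alpha> = K.eval (map h f) \<alpha> \<oplus>\<^bsub>K\<^esub> K.eval (map h g) \<alpha>"
      using eval_norm[OF poly_add_in_carrier[OF set[OF f] set[OF g]]] H.poly_add_hom'[OF set[OF f] set[OF g]]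
        K.eval_poly_add[OF mapped[OF set[OF f]] mapped[OF set[OF g]] \<alpha>]
      by (simp add: univ_poly_add)
  next
    show "K.eval (map h \<one>\<^bsub>poly_ring R\<^esub>) \<alpha> = \<one>\<^bsub>K\<^esub>" using \<alpha> by (simp add: univ_poly_one)
  qed
qed

lemma univ_poly_img_map_surj:
  assumes K: "field K" and h: "h \<in> ring_hom R K"
    and P: "P \<in> carrier (univ_poly K (h ` carrier R))"
  shows "\<exists>f\<in>carrier (poly_ring R). map h f = P"
proof -
  interpret K: field K by fact
  interpret H: ring_hom_ring R K h using ring_hom_ringI2[OF ring_axioms K.ring_axioms h] .
  define f where "f = map (inv_into (carrier R) h) P"
  have pol: "polynomial\<^bsub>K\<^esub> (h ` carrier R) P" using P unfolding univ_poly_carrier[symmetric] .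
  then have setP: "set P \<subseteq> h ` carrier R" using K.polynomial_incl by blast
  then have "map h f = P" unfolding f_def by (induct P) (auto simp: f_inv_into_f)
  moreover have "polynomial (carrier R) f"
  proof (cases P)
    case (Cons b P')
    then have "b \<noteq> \<zero>\<^bsub>K\<^esub>" using pol unfolding polynomial_def by simp
    moreover have "h (inv_into (carrier R) h b) = b" using setP Cons by (auto simp: f_inv_into_f)
    ultimately have "inv_into (carrier R) h b \<noteq> \<zero>" by auto
    then show ?thesis using setP Cons unfolding f_def polynomial_def by (auto intro: inv_into_into)
  qed (simp add: f_def polynomial_def)
  ultimately show ?thesis unfolding univ_poly_carrier by blast
qed

lemma simple_extension_as_poly_quotient:
  assumes ext: "field_extension R K h" and simple: "simple_field_extension R K h"
    and deg: "ext_degree_eq R K h d"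
  obtains \<psi> q where "\<psi> \<in> ring_hom (poly_ring R) K" "\<psi> ` carrier (poly_ring R) = carrier K"
    "\<And>a. a \<in> carrier R \<Longrightarrow> \<psi> (poly_of_const a) = h a"
    "q \<in> carrier (poly_ring R)" "pirreducible (carrier R) q" "degree q = d"
    "\<And>f. f \<in> carrier (poly_ring R) \<Longrightarrow> \<psi> f = \<zero>\<^bsub>K\<^esub> \<longleftrightarrow> q pdivides f"
proof -
  have K: "field K" and h: "h \<in> ring_hom R K" using ext unfolding field_extension_def by auto
  interpret K: field K by fact
  interpret H: ring_hom_ring R K h using ring_hom_ringI2[OF ring_axioms K.ring_axioms h] .
  obtain \<alpha> where \<alpha>: "\<alpha> \<in> carrier K" and gen: "carrier K = generate_field K (insert \<alpha> (h ` carrier R))"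
    using simple unfolding simple_field_extension_def by blast
  define F where "F = h ` carrier R"
  have F: "subfield F K" unfolding F_def using H.img_is_subfield(2)[OF carrier_is_subfield K.one_not_zero] .
  have dim: "K.dimension d F (carrier K)" using deg unfolding ext_degree_eq_def F_def .
  define \<psi> where "\<psi> f = K.eval (map h f) \<alpha>" for f
  have \<psi>: "\<psi> \<in> ring_hom (poly_ring R) K" unfolding \<psi>_def using eval_map_hom[OF K h \<alpha>] .
  have \<psi>_const: "\<psi> (poly_of_const a) = h a" if "a \<in> carrier R" for a
    using that \<alpha> unfolding \<psi>_def poly_of_const_def by auto
  have alg: "(K.algebraic over F) \<alpha>"
    using K.finite_dimension_imp_algebraic[OF F K.carrier_is_subring K.finite_dimensionI[OF dim] \<alpha>] .
  have "subfield (K.simple_extension F \<alpha>) K" using K.simple_extension_is_subfield[OF F \<alpha>] alg by simp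
  moreover have "insert \<alpha> F \<subseteq> K.simple_extension F \<alpha>"
    using K.simple_extension_incl[OF subfieldE(3)[OF F] \<alpha>] K.simple_extension_mem[OF subfieldE(1)[OF F] \<alpha>]
    by blast
  ultimately have "carrier K \<subseteq> K.simple_extension F \<alpha>"
    using K.generate_field_min_subfield1[of "insert \<alpha> F"] subfieldE(3)[OF F] \<alpha> gen
    unfolding F_def by blast
  then have "carrier K \<subseteq> \<psi> ` carrier (poly_ring R)"
    using K.simple_extension_as_eval_img[OF subfieldE(3)[OF F] \<alpha>] univ_poly_img_map_surj[OF K h]
    unfolding \<psi>_def F_def by (smt (verit) image_iff subset_iff)
  then have onto: "\<psi> ` carrier (poly_ring R) = carrier K" using ring_hom_closed[OF \<psi>] by blast
  obtain P where P: "P \<in> carrier (univ_poly K F)" "P \<noteq> []" "K.eval P \<alpha> = \<zero>\<^bsub>K\<^esub>"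
    using K.algebraicE[OF subfieldE(1)[OF F] \<alpha> alg] by blast
  obtain f0 where "f0 \<in> carrier (poly_ring R)" "map h f0 = P"
    using univ_poly_img_map_surj[OF K h P(1)[unfolded F_def]] by blast
  then have f0: "f0 \<in> carrier (poly_ring R)" "f0 \<noteq> []" "\<psi> f0 = \<zero>\<^bsub>K\<^esub>"
    using P(2,3) unfolding \<psi>_def by auto
  obtain q where q: "q \<in> carrier (poly_ring R)" "pirreducible (carrier R) q"
    and ker: "\<And>f. f \<in> carrier (poly_ring R) \<Longrightarrow> \<psi> f = \<zero>\<^bsub>K\<^esub> \<longleftrightarrow> q pdivides f"
    using poly_hom_kernel_generator[OF K.domain_axioms \<psi> f0] by blast
  have "(\<psi> \<circ> poly_of_const) ` carrier R = F" using \<psi>_const unfolding F_def by auto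
  then have "K.dimension (degree q) F (carrier K)"
    using poly_quotient_dimension[OF q K \<psi> onto ker] by simp
  then have "degree q = d" using K.dimension_is_inj[OF F _ dim] by blast
  then show ?thesis using that[OF \<psi> onto \<psi>_const q] ker by blast
qed

lemma isotropic_over_simple_extension_imp_isotropic_in_degree:
  assumes c: "cubic_form R n c" and ext: "field_extension R K h"
    and simple: "simple_field_extension R K h" and deg: "ext_degree_eq R K h d"
    and iso: "isotropic_over K h n c"
  shows "isotropic_in_degree R n c d"
proof -
  obtain \<psi> q where \<psi>: "\<psi> \<in> ring_hom (poly_ring R) K" and onto: "\<psi> ` carrier (poly_ring R) = carrier K"
    and \<psi>_const: "\<And>a. a \<in> carrier R \<Longrightarrow> \<psi> (poly_of_const a) = h a"
    and q: "q \<in> carrier (poly_ring R)" "pirreducible (carrier R) q" "degree q = d"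
    and ker: "\<And>f. f \<in> carrier (poly_ring R) \<Longrightarrow> \<psi> f = \<zero>\<^bsub>K\<^esub> \<longleftrightarrow> q pdivides f"
    using simple_extension_as_poly_quotient[OF ext simple deg] by blast
  interpret K: field K using ext unfolding field_extension_def by blast
  obtain x where x: "\<And>i. i<n \<Longrightarrow> x i \<in> carrier K" "\<exists>i<n. x i \<noteq> \<zero>\<^bsub>K\<^esub>"
    "base_change_eval K h n c x = \<zero>\<^bsub>K\<^esub>"
    using iso unfolding isotropic_over_def by blast
  define v where "v i = inv_into (carrier (poly_ring R)) \<psi> (x i)" for i
  have v: "v i \<in> carrier (poly_ring R)" "\<psi> (v i) = x i" if "i<n" for i
    using x(1)[OF that] onto unfolding v_def by (auto intro: inv_into_into f_inv_into_f)
  have "base_change_eval K (\<psi> \<circ> poly_of_const) n c (\<psi> \<circ> v) = base_change_eval K h n c x"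
    using c v x(1) \<psi>_const ring_hom_closed[OF field_extension_def[THEN iffD1, OF ext, THEN conjunct2]]
    by (intro K.base_change_eval_cong) (auto simp: cubic_form_def)
  then have "isotropic_mod R n c q v"
    using isotropic_mod_iff_hom[OF c K.is_cring \<psi> ker] v x by auto
  then show ?thesis using q unfolding isotropic_in_degree_def by blast
qed

end

theorem theorem3p8:
  fixes k :: "'a ring" and n :: nat and c :: "nat \<Rightarrow> nat \<Rightarrow> nat \<Rightarrow> 'a"
    and K :: "'b ring" and hK :: "'a \<Rightarrow> 'b"
  assumes "field k"
    and "cubic_form k n c"
    and "field_extension k K hK"
    and "simple_field_extension k K hK"
    and "ext_degree_eq k K hK 4"
    and "isotropic_over K hK n c"
  shows "\<exists>(L :: 'a list ring) (hL :: 'a \<Rightarrow> 'a list) d.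
           field_extension k L hL \<and> d \<in> {1, 5} \<and> ext_degree_eq k L hL d \<and>
           isotropic_over L hL n c"
proof -
  interpret k: field k by fact
  have "isotropic_in_degree k n c 4"
    using k.isotropic_over_simple_extension_imp_isotropic_in_degree[OF assms(2-6)] .
  then have "isotropic_in_degree k n c 1 \<or> isotropic_in_degree k n c 5"
    by (rule k.isotropic_in_degree_4_imp_1_or_5[OF assms(2)])
  then show ?thesis using k.isotropic_in_degree_imp_isotropic_extension[OF assms(2)] by blast
qed

end
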